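(* Let $p$ be a prime number and $k,N$ positive integers. Suppose that integers $n,m\geq N$ satisfy $n\equiv m\pmod{\varphi(p^N)}$. Then \[ C^{(-k)}_{n}\equiv C^{(-k)}_{m}\pmod{p^N}. \]
   Context: For any integer $k$, let $\mathrm{Li}_k(t)=\sum_{n=1}^{\infty} t^n/n^k$. The poly-Bernoulli numbers of type $C$, $C^{(k)}_n$ ($n\ge0$), are defined by $\frac{\mathrm{Li}_k(1-e^{-t})}{e^{t}-1}=\sum_{n=0}^{\infty}C^{(k)}_n\frac{t^n}{n!}$. For negative upper index these are integers. $\varphi$ denotes Euler's totient function, so $\varphi(p^N)=p^{N-1}(p-1)$. *)

theory Defs
  imports "HOL-Computational_Algebra.Formal_Power_Series" "HOL-Number_Theory.Number_Theory"
begin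

definition Li_neg_fps :: "nat \<Rightarrow> rat fps" where
  "Li_neg_fps k = Abs_fps (\<lambda>n. if n = 0 then 0 else of_nat n ^ k)"

definition polyBernoulliC_gf :: "nat \<Rightarrow> rat fps" where
  "polyBernoulliC_gf k =
     fps_compose (Li_neg_fps k) (1 - fps_exp (-1)) / (fps_exp 1 - 1)"

definition polyBernoulliC_neg :: "nat \<Rightarrow> nat \<Rightarrow> rat" where
  "polyBernoulliC_neg k n = fact n * fps_nth (polyBernoulliC_gf k) n"

end

theory Submission
  imports Defs
begin

unbundle fps_syntax

text \<open>Write y = 1 - e^(-t). From Li_{-(k+1)}(x) = x Li_{-k}'(x), y' = e^(-t) and y e^t = e^t - 1
one gets by induction on k that Li_{-k}(y) = (e^t - 1) Q_k with Q_k an integer combination of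
the exponentials e^(i t), i = 0, 1, 2, ...; so the generating function of C^{(-k)}_n is Q_k and
C^{(-k)}_n = sum_i c_i i^n. Each power i^n is periodic modulo p^N for n \<ge> N with period
dividing totient (p^N): by Euler's theorem if p does not divide i, and because p^N divides i^n
otherwise.\<close>

inductive int_exp_comb :: "'a::field_char_0 fps \<Rightarrow> bool" where
  zero: "int_exp_comb 0"
| add_exp: "int_exp_comb F \<Longrightarrow> int_exp_comb (F + fps_const (of_int c) * fps_exp (of_nat i))"

lemma int_exp_comb_one: "int_exp_comb 1"
  using int_exp_comb.add_exp[OF int_exp_comb.zero, of 1 0] by simp

lemma int_exp_comb_add:
  assumes "int_exp_comb F" and "int_exp_comb G"
  shows "int_exp_comb (F + G)"
  using assms(2)
proof (induction G rule: int_exp_comb.induct)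
  case zero
  then show ?case using assms(1) by simp
next
  case (add_exp G c i)
  then show ?case using int_exp_comb.add_exp[of "F + G" c i] by (simp add: add.assoc)
qed

lemma int_exp_comb_uminus:
  fixes F :: "'a::field_char_0 fps"
  shows "int_exp_comb F \<Longrightarrow> int_exp_comb (- F)"
proof (induction F rule: int_exp_comb.induct)
  case zero
  then show ?case by (simp add: int_exp_comb.zero)
next
  case (add_exp F c i)
  have "- (F + fps_const (of_int c) * fps_exp (of_nat i :: 'a))
      = - F + fps_const (of_int (- c)) * fps_exp (of_nat i)"
    by (simp flip: fps_const_neg)
  then show ?case using int_exp_comb.add_exp[OF add_exp.IH, of "- c" i] by simp
qed

lemma int_exp_comb_diff: "int_exp_comb F \<Longrightarrow> int_exp_comb G \<Longrightarrow> int_exp_comb (F - G)"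
  using int_exp_comb_add[of F "- G"] int_exp_comb_uminus[of G] by simp

lemma int_exp_comb_exp_mult:
  fixes F :: "'a::field_char_0 fps"
  shows "int_exp_comb F \<Longrightarrow> int_exp_comb (fps_exp 1 * F)"
proof (induction F rule: int_exp_comb.induct)
  case zero
  then show ?case by (simp add: int_exp_comb.zero)
next
  case (add_exp F c i)
  have "fps_exp 1 * fps_exp (of_nat i) = fps_exp (of_nat (Suc i) :: 'a)"
    by (simp add: fps_exp_add_mult)
  then have "fps_exp 1 * (F + fps_const (of_int c) * fps_exp (of_nat i))
      = fps_exp 1 * F + fps_const (of_int c) * fps_exp (of_nat (Suc i))"
    by (simp add: algebra_simps)
  then show ?case using int_exp_comb.add_exp[OF add_exp.IH, of c "Suc i"] by simp
qed

lemma int_exp_comb_deriv: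
  fixes F :: "'a::field_char_0 fps"
  shows "int_exp_comb F \<Longrightarrow> int_exp_comb (fps_deriv F)"
proof (induction F rule: int_exp_comb.induct)
  case zero
  then show ?case by (simp add: int_exp_comb.zero)
next
  case (add_exp F c i)
  have "fps_deriv (fps_const (of_int c) * fps_exp (of_nat i :: 'a))
      = fps_const (of_int (c * int i)) * fps_exp (of_nat i)"
    by (simp add: mult_ac flip: fps_const_mult)
  then show ?case using int_exp_comb.add_exp[OF add_exp.IH, of "c * int i" i]
    by (simp only: fps_deriv_add)
qed

lemma int_exp_comb_coeff_diff:
  fixes F :: "'a::field_char_0 fps" and M n m :: nat
  assumes "int_exp_comb F" and power_cong: "\<And>i. [i ^ n = i ^ m] (mod M)"
  shows "\<exists>q :: int. fact n * F $ n - fact m * F $ m = of_int (int M * q)"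
  using assms(1)
proof (induction F rule: int_exp_comb.induct)
  case zero
  then show ?case by (intro exI[of _ 0]) simp
next
  case (add_exp F c i)
  then obtain q where q: "fact n * F $ n - fact m * F $ m = of_int (int M * q)"
    by blast
  have "[int i ^ n = int i ^ m] (mod int M)"
    using power_cong[of i] by (simp flip: cong_int_iff)
  then obtain r where r: "int i ^ n - int i ^ m = int M * r"
    by (metis cong_iff_dvd_diff dvd_def)
  have "fact n * (F + fps_const (of_int c) * fps_exp (of_nat i)) $ n
        - fact m * (F + fps_const (of_int c) * fps_exp (of_nat i)) $ m
      = (fact n * F $ n - fact m * F $ m) + of_int (c * (int i ^ n - int i ^ m))"
    by (simp add: algebra_simps)
  also have "\<dots> = of_int (int M * (q + c * r))"
    unfolding q r by (simp add: algebra_simps)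
  finally show ?case by blast
qed

lemma Li_neg_fps_Suc: "Li_neg_fps (Suc k) = fps_X * fps_deriv (Li_neg_fps k)"
  by (auto simp: fps_eq_iff Li_neg_fps_def)

lemma Li_neg_fps_0_mult: "Li_neg_fps 0 * (1 - fps_X) = fps_X"
proof -
  have "Li_neg_fps 0 * (1 - fps_X) = Li_neg_fps 0 - fps_X * Li_neg_fps 0"
    by (simp add: algebra_simps)
  also have "\<dots> = fps_X"
    by (auto simp: fps_eq_iff Li_neg_fps_def)
  finally show ?thesis .
qed

lemma fps_exp_neg_mult: "fps_exp (- a) * fps_exp a = (1 :: 'a::field_char_0 fps)"
  by (simp flip: fps_exp_add_mult)

lemma one_minus_fps_exp_neg_mult:
  "(1 - fps_exp (- 1)) * fps_exp 1 = fps_exp 1 - (1 :: 'a::field_char_0 fps)"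
  by (simp add: left_diff_distrib fps_exp_neg_mult)

lemma Li_neg_fps_0_compose: "Li_neg_fps 0 oo (1 - fps_exp (-1)) = fps_exp 1 - 1"
proof -
  let ?y = "1 - fps_exp (-1) :: rat fps"
  have y0: "?y $ 0 = 0" by simp
  have "(Li_neg_fps 0 oo ?y) * ((1 - fps_X) oo ?y) = ?y"
    using arg_cong[OF Li_neg_fps_0_mult, of "\<lambda>F. F oo ?y"]
    by (simp add: fps_compose_mult_distrib[OF y0])
  then have L: "(Li_neg_fps 0 oo ?y) * fps_exp (-1) = ?y"
    by (simp add: fps_compose_sub_distrib)
  have "Li_neg_fps 0 oo ?y = (Li_neg_fps 0 oo ?y) * fps_exp (-1) * fps_exp 1"
    by (simp add: fps_exp_neg_mult mult.assoc)
  also have "\<dots> = fps_exp 1 - 1"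
    by (simp only: L one_minus_fps_exp_neg_mult)
  finally show ?thesis .
qed

lemma Li_neg_fps_Suc_compose:
  "Li_neg_fps (Suc k) oo (1 - fps_exp (-1))
    = (fps_exp 1 - 1) * fps_deriv (Li_neg_fps k oo (1 - fps_exp (-1)))"
proof -
  let ?y = "1 - fps_exp (-1) :: rat fps"
  have y0: "?y $ 0 = 0" by simp
  have dy: "fps_deriv ?y = fps_exp (-1)"
    by (simp add: fps_eq_iff)
  have "Li_neg_fps (Suc k) oo ?y = ?y * (fps_deriv (Li_neg_fps k) oo ?y)"
    by (simp add: Li_neg_fps_Suc fps_compose_mult_distrib[OF y0])
  also have "\<dots> = ?y * fps_exp 1 * ((fps_deriv (Li_neg_fps k) oo ?y) * fps_exp (-1))"
    by (simp add: mult_ac flip: fps_exp_add_mult)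
  also have "\<dots> = (fps_exp 1 - 1) * fps_deriv (Li_neg_fps k oo ?y)"
    unfolding one_minus_fps_exp_neg_mult fps_compose_deriv[OF y0] dy ..
  finally show ?thesis .
qed

lemma Li_neg_fps_compose_factor:
  "\<exists>Q. int_exp_comb Q \<and> Li_neg_fps k oo (1 - fps_exp (-1)) = (fps_exp 1 - 1) * Q"
proof (induction k)
  case 0
  show ?case using Li_neg_fps_0_compose int_exp_comb_one by auto
next
  case (Suc k)
  then obtain Q where Q: "int_exp_comb Q"
    "Li_neg_fps k oo (1 - fps_exp (-1)) = (fps_exp 1 - 1) * Q"
    by blast
  have "fps_deriv (Li_neg_fps k oo (1 - fps_exp (-1)))
      = fps_exp 1 * Q + fps_exp 1 * fps_deriv Q - fps_deriv Q"
    unfolding Q(2) by (simp add: algebra_simps)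
  moreover have "int_exp_comb (fps_exp 1 * Q + fps_exp 1 * fps_deriv Q - fps_deriv Q)"
    by (intro int_exp_comb_diff int_exp_comb_add int_exp_comb_exp_mult int_exp_comb_deriv Q(1))
  ultimately show ?case using Li_neg_fps_Suc_compose[of k] by metis
qed

lemma polyBernoulliC_gf_int_exp_comb: "int_exp_comb (polyBernoulliC_gf k)"
proof -
  obtain Q where Q: "int_exp_comb Q"
    "Li_neg_fps k oo (1 - fps_exp (-1)) = (fps_exp 1 - 1) * Q"
    using Li_neg_fps_compose_factor by blast
  have "fps_exp 1 - 1 \<noteq> (0 :: rat fps)"
    by simp
  then have "polyBernoulliC_gf k = Q"
    by (simp add: polyBernoulliC_gf_def Q(2))
  with Q(1) show ?thesis by simp
qed

lemma power_cong_prime_power: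
  fixes p N n m i :: nat
  assumes "prime p" and "n \<ge> N" and "m \<ge> N" and "[n = m] (mod totient (p ^ N))"
  shows "[i ^ n = i ^ m] (mod p ^ N)"
proof (cases "p dvd i")
  case True
  then have "p ^ N dvd i ^ N"
    by (simp add: dvd_power_same)
  then have "p ^ N dvd i ^ n" and "p ^ N dvd i ^ m"
    using assms(2,3) by (meson dvd_trans le_imp_power_dvd)+
  then show ?thesis
    by (simp add: cong_def)
next
  case False
  then have "coprime (p ^ N) i"
    using assms(1) by (simp add: prime_imp_coprime)
  then show ?thesis
    using assms(4) order_divides_expdiff order_divides_totient cong_dvd_modulus_nat by blast
qed

theorem theorem2p5:
  fixes p k N n m :: nat
  assumes "prime p" and "k > 0" and "N > 0"
    and "n \<ge> N" and "m \<ge> N"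
    and "[n = m] (mod totient (p ^ N))"
  shows "\<exists>q :: int. polyBernoulliC_neg k n - polyBernoulliC_neg k m = of_int (int (p ^ N) * q)"
  unfolding polyBernoulliC_neg_def
  using int_exp_comb_coeff_diff[OF polyBernoulliC_gf_int_exp_comb power_cong_prime_power]
    assms(1,4-6) by blast

end
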